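(* Consider the patient model in the context and let $z_t:=[x_t\ u_t^\top\ d_t^\top]^\top$. With $\bar\Gamma:=(C_x^2+2)I_{2M+1}$, where $C_x:=\frac{\bar b+\bar c+\bar w}{1-\bar a}$, we have $\mathbf P\big[\sum_{t=1}^Tz_tz_t^\top\not\preceq T\bar\Gamma\big]=0$, i.e. $\sum_{t=1}^Tz_tz_t^\top\preceq T\bar\Gamma$ almost surely.
   Context: Patient model: $M\geq1$ treatments; $\mathcal U:=\{v\in\{0,1\}^M:\|v\|_0\leq1\}$. State $x_t\in\mathbb R$ evolves as $x_{t+1}=ax_t+b^\top u_t+c^\top d_t+w_t$, with actions $u_t\in\mathcal U$ and adherence $d_t\in\mathcal U$, $d^i_t\mid x_t,u^i_t\sim\mathrm{Bernoulli}(u^i_t\sigma(x_t+\mu_i))$, $\sigma$ the sigmoid. Parameters: $a\in[0,\bar a]$, known $\bar a\in(0,1)$, $\|b\|_\infty\leq\bar b$, $\|c\|_\infty\leq\bar c$, $\mu\in[-\bar\mu,\bar\mu]^M$. $x_t,u_t,d_t$ fully observed. Noise $w_t$ i.i.d., zero-symmetric, $\sigma_s^2$-subgaussian, $|w_t|\leq\bar w$ ($\bar w>0$), log-concave density, known variance $\sigma_w^2>0$; $x_1$ distributed as $w_t$. $\preceq$ is the Loewner order. *)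

theory Defs
  imports "HOL-Probability.Probability"
begin

definition sigmoid :: "real \<Rightarrow> real" where
  "sigmoid s = 1 / (1 + exp (- s))"

text \<open>Action/adherence set U = {v in {0,1}^m : ||v||_0 <= 1}; vectors in R^m are
  represented as functions nat => real, only the coordinates i < m being relevant.\<close>
definition actset :: "nat \<Rightarrow> (nat \<Rightarrow> real) set" where
  "actset m = {v. (\<forall>i<m. v i \<in> {0, 1}) \<and> card {i\<in>{..<m}. v i \<noteq> 0} \<le> 1}"

definition zvec :: "nat \<Rightarrow> real \<Rightarrow> (nat \<Rightarrow> real) \<Rightarrow> (nat \<Rightarrow> real) \<Rightarrow> nat \<Rightarrow> real" where
  "zvec m x u d j = (if j = 0 then x else if j \<le> m then u (j - 1) else d (j - m - 1))"

definition loewner_le :: "nat \<Rightarrow> (nat \<Rightarrow> nat \<Rightarrow> real) \<Rightarrow> (nat \<Rightarrow> nat \<Rightarrow> real) \<Rightarrow> bool" where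
  "loewner_le n A B \<longleftrightarrow> (\<forall>v::nat \<Rightarrow> real. (\<Sum>i<n. \<Sum>j<n. v i * (B i j - A i j) * v j) \<ge> 0)"

definition log_concave :: "(real \<Rightarrow> real) \<Rightarrow> bool" where
  "log_concave f \<longleftrightarrow> (\<forall>x y \<theta>. 0 \<le> \<theta> \<and> \<theta> \<le> 1 \<longrightarrow>
      f x powr \<theta> * f y powr (1 - \<theta>) \<le> f (\<theta> * x + (1 - \<theta>) * y))"

end

theory Submission
  imports Defs
begin

text \<open>The bound holds pathwise. Almost surely the initial state and every noise sample lie in
  [-wbar, wbar]; since at most one action and one adherence coordinate are active, the input to the
  stable recursion x_{t+1} = a x_t + e_t is bounded by bbar + cbar + wbar, so by induction
  |x_t| \<le> C_x. Hence |z_t|^2 \<le> C_x^2 + 2, and each rank-one matrix z_t z_t^T is bounded by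
  |z_t|^2 I by Cauchy-Schwarz.\<close>

lemma actset_weighted_sum_abs_le:
  assumes v: "v \<in> actset m" and g: "\<forall>i<m. \<bar>g i\<bar> \<le> B" and B: "0 \<le> B"
  shows "\<bar>\<Sum>i<m. g i * v i\<bar> \<le> B"
proof -
  define S where "S = {i\<in>{..<m}. v i \<noteq> 0}"
  have card_S: "card S \<le> 1" and v01: "\<forall>i<m. v i \<in> {0,1}"
    using v by (auto simp: actset_def S_def)
  have "(\<Sum>i<m. g i * v i) = (\<Sum>i\<in>S. g i * v i)"
    by (rule sum.mono_neutral_right) (auto simp: S_def)
  also have "\<dots> = (\<Sum>i\<in>S. g i)"
    by (rule sum.cong) (use v01 in \<open>auto simp: S_def\<close>)
  finally have "\<bar>\<Sum>i<m. g i * v i\<bar> \<le> (\<Sum>i\<in>S. \<bar>g i\<bar>)"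
    by (simp add: sum_abs)
  also have "\<dots> \<le> (\<Sum>i\<in>S. B)"
    by (rule sum_mono) (use g in \<open>auto simp: S_def\<close>)
  also have "\<dots> = real (card S) * B" by simp
  also have "\<dots> \<le> B"
    using card_S B mult_right_mono[of "real (card S)" 1 B] by simp
  finally show ?thesis .
qed

lemma actset_sum_squares_le:
  assumes "v \<in> actset m"
  shows "(\<Sum>i<m. (v i)\<^sup>2) \<le> 1"
proof -
  have "\<forall>i<m. \<bar>v i\<bar> \<le> 1" using assms by (auto simp: actset_def)
  from actset_weighted_sum_abs_le[OF assms this] show ?thesis
    by (simp add: power2_eq_square)
qed

lemma zvec_sum_squares:
  "(\<Sum>j<2*m+1. (zvec m x u d j)\<^sup>2) = x\<^sup>2 + (\<Sum>i<m. (u i)\<^sup>2) + (\<Sum>i<m. (d i)\<^sup>2)"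
proof -
  have split: "{..<2*m+1} = {0} \<union> ({1..m} \<union> {m+1..2*m})" by auto
  have "(\<Sum>j<2*m+1. (zvec m x u d j)\<^sup>2)
      = x\<^sup>2 + (\<Sum>j\<in>{1..m}. (u (j-1))\<^sup>2) + (\<Sum>j\<in>{m+1..2*m}. (d (j-m-1))\<^sup>2)"
    unfolding split by (subst sum.union_disjoint; auto simp: sum.union_disjoint zvec_def)+
  also have "(\<Sum>j\<in>{1..m}. (u (j-1))\<^sup>2) = (\<Sum>i<m. (u i)\<^sup>2)"
    by (rule sum.reindex_bij_witness[where i="\<lambda>i. i+1" and j="\<lambda>j. j-1"]) auto
  also have "(\<Sum>j\<in>{m+1..2*m}. (d (j-m-1))\<^sup>2) = (\<Sum>i<m. (d i)\<^sup>2)"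
    by (rule sum.reindex_bij_witness[where i="\<lambda>i. i+m+1" and j="\<lambda>j. j-m-1"]) auto
  finally show ?thesis .
qed

lemma zvec_sum_squares_le:
  assumes "u \<in> actset m" "d \<in> actset m"
  shows "(\<Sum>j<2*m+1. (zvec m x u d j)\<^sup>2) \<le> x\<^sup>2 + 2"
  unfolding zvec_sum_squares
  using actset_sum_squares_le[OF assms(1)] actset_sum_squares_le[OF assms(2)] by linarith

lemma quadratic_form_sum_outer:
  fixes z :: "'t \<Rightarrow> nat \<Rightarrow> real"
  shows "(\<Sum>i<n. \<Sum>j<n. v i * (\<Sum>t\<in>I. z t i * z t j) * v j) = (\<Sum>t\<in>I. (\<Sum>i<n. v i * z t i)\<^sup>2)"
  by (simp add: power2_eq_square sum_distrib_left sum_distrib_right mult_ac sum.swap[of _ I])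

lemma quadratic_form_scaled_identity:
  fixes v :: "nat \<Rightarrow> real"
  shows "(\<Sum>i<n. \<Sum>j<n. v i * (if i = j then K else 0) * v j) = K * (\<Sum>i<n. (v i)\<^sup>2)"
proof -
  have "v i * (if i = j then K else 0) * v j = (if i = j then K * (v i)\<^sup>2 else 0)" for i j
    by (auto simp: power2_eq_square)
  then show ?thesis
    by (simp add: sum_distrib_left)
qed

lemma loewner_le_sum_outer_scaled_identity:
  fixes z :: "'t \<Rightarrow> nat \<Rightarrow> real"
  assumes "\<forall>t\<in>I. (\<Sum>j<n. (z t j)\<^sup>2) \<le> K"
  shows "loewner_le n (\<lambda>j k. \<Sum>t\<in>I. z t j * z t k) (\<lambda>j k. if j = k then real (card I) * K else 0)"
  unfolding loewner_le_def
proof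
  fix v :: "nat \<Rightarrow> real"
  have "(\<Sum>t\<in>I. (\<Sum>i<n. v i * z t i)\<^sup>2) \<le> (\<Sum>t\<in>I. (\<Sum>i<n. (v i)\<^sup>2) * K)"
  proof (rule sum_mono)
    fix t assume t: "t \<in> I"
    have "(\<Sum>i<n. v i * z t i)\<^sup>2 \<le> (\<Sum>i<n. (v i)\<^sup>2) * (\<Sum>i<n. (z t i)\<^sup>2)"
      by (rule Cauchy_Schwarz_ineq_sum)
    also have "\<dots> \<le> (\<Sum>i<n. (v i)\<^sup>2) * K"
      using assms t by (intro mult_left_mono) (auto intro: sum_nonneg)
    finally show "(\<Sum>i<n. v i * z t i)\<^sup>2 \<le> (\<Sum>i<n. (v i)\<^sup>2) * K" .
  qed
  also have "\<dots> = real (card I) * K * (\<Sum>i<n. (v i)\<^sup>2)"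
    by simp
  finally show "0 \<le> (\<Sum>i<n. \<Sum>j<n. v i * ((if i = j then real (card I) * K else 0)
                                          - (\<Sum>t\<in>I. z t i * z t j)) * v j)"
    by (simp add: right_diff_distrib left_diff_distrib sum_subtractf
        quadratic_form_sum_outer quadratic_form_scaled_identity)
qed

lemma loewner_le_sum_zvec_outer:
  assumes "\<forall>t\<in>{1..T}. \<bar>x t\<bar> \<le> C \<and> u t \<in> actset m \<and> d t \<in> actset m"
  shows "loewner_le (2 * m + 1)
    (\<lambda>j k. \<Sum>t = 1..T. zvec m (x t) (u t) (d t) j * zvec m (x t) (u t) (d t) k)
    (\<lambda>j k. if j = k then real T * (C\<^sup>2 + 2) else 0)"
proof -
  have "(\<Sum>j<2*m+1. (zvec m (x t) (u t) (d t) j)\<^sup>2) \<le> C\<^sup>2 + 2" if "t \<in> {1..T}" for t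
    using assms that zvec_sum_squares_le[of "u t" m "d t" "x t"] power_mono[of "\<bar>x t\<bar>" C 2]
    by force
  then have "loewner_le (2 * m + 1)
      (\<lambda>j k. \<Sum>t\<in>{1..T}. zvec m (x t) (u t) (d t) j * zvec m (x t) (u t) (d t) k)
      (\<lambda>j k. if j = k then real (card {1..T}) * (C\<^sup>2 + 2) else 0)"
    by (intro loewner_le_sum_outer_scaled_identity ballI)
  moreover have "card {1..T} = T"
    by simp
  ultimately show ?thesis
    by (simp only:)
qed

lemma stable_recursion_abs_le:
  fixes x :: "nat \<Rightarrow> real"
  assumes "0 \<le> a" "a \<le> abar" "abar < 1"
    and init: "\<bar>x 1\<bar> \<le> E / (1 - abar)"
    and step: "\<And>t. t \<ge> 1 \<Longrightarrow> \<bar>x (Suc t) - a * x t\<bar> \<le> E"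
    and "t \<ge> 1"
  shows "\<bar>x t\<bar> \<le> E / (1 - abar)"
  using \<open>t \<ge> 1\<close>
proof (induction t rule: nat_induct_at_least)
  case base
  then show ?case using init by simp
next
  case (Suc t)
  have "\<bar>a * x t\<bar> \<le> abar * (E / (1 - abar))"
    unfolding abs_mult using assms Suc.IH by (intro mult_mono) auto
  moreover have "abar * (E / (1 - abar)) + E = E / (1 - abar)"
    using assms by (simp add: field_simps)
  ultimately show ?case
    using step[OF Suc.hyps] by linarith
qed

lemma (in prob_space) AE_in_set_if_distr_eq:
  assumes "X \<in> borel_measurable M" "Y \<in> borel_measurable M"
    and "distr M borel X = distr M borel Y" and "S \<in> sets borel"
    and "AE \<omega> in M. Y \<omega> \<in> S"
  shows "AE \<omega> in M. X \<omega> \<in> S"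
proof -
  have "AE y in distr M borel Y. y \<in> S"
    using assms by (simp add: AE_distr_iff)
  then have "AE y in distr M borel X. y \<in> S"
    unfolding assms(3) .
  then show ?thesis
    using assms by (simp add: AE_distr_iff)
qed

theorem proposition3:
  fixes P :: "'o measure"
    and m :: nat and T :: nat
    and a abar bbar cbar wbar mubar sigma_s sigma_w :: real
    and b c mu :: "nat \<Rightarrow> real"
    and x w :: "nat \<Rightarrow> 'o \<Rightarrow> real"
    and u d :: "nat \<Rightarrow> 'o \<Rightarrow> nat \<Rightarrow> real"
    and f :: "real \<Rightarrow> real"
  assumes P: "prob_space P"
    and m: "m \<ge> 1"
    and abar: "0 < abar" "abar < 1"
    and a: "0 \<le> a" "a \<le> abar"
    and b: "\<forall>i<m. \<bar>b i\<bar> \<le> bbar"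
    and c: "\<forall>i<m. \<bar>c i\<bar> \<le> cbar"
    and mu: "\<forall>i<m. - mubar \<le> mu i \<and> mu i \<le> mubar"
    and wbar: "wbar > 0"
    and sigma_w: "sigma_w > 0"
    \<comment> \<open>measurability of the observed processes\<close>
    and x_meas: "\<forall>t\<ge>1. x t \<in> borel_measurable P"
    and u_meas: "\<forall>t\<ge>1. \<forall>i<m. (\<lambda>\<omega>. u t \<omega> i) \<in> borel_measurable P"
    and d_meas: "\<forall>t\<ge>1. \<forall>i<m. (\<lambda>\<omega>. d t \<omega> i) \<in> borel_measurable P"
    \<comment> \<open>actions and adherence lie in U\<close>
    and u_U: "\<forall>t\<ge>1. \<forall>\<omega>\<in>space P. u t \<omega> \<in> actset m"
    and d_U: "\<forall>t\<ge>1. \<forall>\<omega>\<in>space P. d t \<omega> \<in> actset m"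
    \<comment> \<open>adherence: d_t^i given (x_t, u_t^i) is Bernoulli(u_t^i sigmoid(x_t + mu_i))\<close>
    and adherence: "\<forall>t\<ge>1. \<forall>i<m. \<forall>B \<in> sets (borel :: (real \<times> real) measure).
        measure P {\<omega>\<in>space P. (x t \<omega>, u t \<omega> i) \<in> B \<and> d t \<omega> i = 1}
        = (\<integral>\<omega>. indicator B (x t \<omega>, u t \<omega> i) * (u t \<omega> i * sigmoid (x t \<omega> + mu i)) \<partial>P)"
    \<comment> \<open>dynamics\<close>
    and dyn: "\<forall>t\<ge>1. \<forall>\<omega>\<in>space P. x (Suc t) \<omega> =
        a * x t \<omega> + (\<Sum>i<m. b i * u t \<omega> i) + (\<Sum>i<m. c i * d t \<omega> i) + w t \<omega>"
    \<comment> \<open>noise: i.i.d., symmetric, bounded, sub-Gaussian, log-concave density, variance sigma_w^2\<close>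
    and w_indep: "prob_space.indep_vars P (\<lambda>_. borel) w {1..}"
    and w_ident: "\<forall>t\<ge>1. distr P borel (w t) = distr P borel (w 1)"
    and w_density: "\<forall>t\<ge>1. distributed P lborel (w t) f"
    and f_logconc: "log_concave f"
    and w_sym: "\<forall>t\<ge>1. distr P borel (w t) = distr P borel (\<lambda>\<omega>. - w t \<omega>)"
    and w_bdd: "\<forall>t\<ge>1. AE \<omega> in P. \<bar>w t \<omega>\<bar> \<le> wbar"
    and w_subg: "\<forall>t\<ge>1. \<forall>l::real. integrable P (\<lambda>\<omega>. exp (l * w t \<omega>)) \<and>
        prob_space.expectation P (\<lambda>\<omega>. exp (l * w t \<omega>)) \<le> exp (l\<^sup>2 * sigma_s\<^sup>2 / 2)"
    and w_var: "\<forall>t\<ge>1. prob_space.variance P (w t) = sigma_w\<^sup>2"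
    \<comment> \<open>initial state distributed as the noise\<close>
    and x1: "distr P borel (x 1) = distr P borel (w 1)"
  shows "AE \<omega> in P.
    loewner_le (2 * m + 1)
      (\<lambda>j k. \<Sum>t = 1..T. zvec m (x t \<omega>) (u t \<omega>) (d t \<omega>) j * zvec m (x t \<omega>) (u t \<omega>) (d t \<omega>) k)
      (\<lambda>j k. if j = k then real T * (((bbar + cbar + wbar) / (1 - abar))\<^sup>2 + 2) else 0)"
proof -
  interpret prob_space P by (rule P)
  define E where "E = bbar + cbar + wbar"
  have "0 \<le> bbar" "0 \<le> cbar" using b c m by force+
  then have "wbar \<le> E" "E \<le> E / (1 - abar)"
    using abar wbar by (simp_all add: E_def le_divide_eq mult_left_le)
  moreover have "AE \<omega> in P. x 1 \<omega> \<in> {-wbar..wbar}"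
    using w_bdd x_meas distributed_measurable[OF w_density[rule_format, of 1]]
    by (intro AE_in_set_if_distr_eq[OF _ _ x1]) (auto simp: abs_le_iff)
  ultimately have AE_x1: "AE \<omega> in P. \<bar>x 1 \<omega>\<bar> \<le> E / (1 - abar)"
    by (auto elim: AE_mp)
  have AE_w: "AE \<omega> in P. \<forall>t\<ge>1. \<bar>w t \<omega>\<bar> \<le> wbar"
    using w_bdd by (simp add: AE_all_countable)
  show ?thesis
    using AE_x1 AE_w AE_space
  proof eventually_elim
    case (elim \<omega>)
    have "\<bar>x (Suc t) \<omega> - a * x t \<omega>\<bar> \<le> E" if "t \<ge> 1" for t
      using dyn elim that b c \<open>0 \<le> bbar\<close> \<open>0 \<le> cbar\<close>
        actset_weighted_sum_abs_le[OF u_U[rule_format, OF that \<open>\<omega> \<in> space P\<close>], of b bbar]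
        actset_weighted_sum_abs_le[OF d_U[rule_format, OF that \<open>\<omega> \<in> space P\<close>], of c cbar]
      by (auto simp: E_def)
    then have "\<bar>x t \<omega>\<bar> \<le> E / (1 - abar)" if "t \<ge> 1" for t
      using stable_recursion_abs_le[of a abar "\<lambda>t. x t \<omega>"] a abar elim that by auto
    then show ?case
      using loewner_le_sum_zvec_outer[of T "\<lambda>t. x t \<omega>" "E / (1 - abar)"] u_U d_U elim
      unfolding E_def by auto
  qed
qed

end
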